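(* Let $(S^*,c_{\lim})$ be a measurement tuple with $m$ measurements, adjoint fields $c_1^*,\dots,c_m^*$, and let $J_+=\{j:c_{\lim,j}>0\}$ and $J_-=\{j:c_{\lim,j}<0\}$ both be nonempty (so $J_+\cup J_-=\{1,\dots,m\}$). Assume $0<\sup c_j^*<\infty$ for $j\in J_+$. Let $k_j>0$ and $0\le\beta_j\le\alpha_j$ for $j=1,\dots,m$, and $$\mathcal S=\bigcap_{j=1}^m\{S\in\mathcal M^+:\ \beta_jS\{c_j^*\ge k_j\}\le S\{c_j^*<k_j\}\le\alpha_jS\{c_j^*\ge k_j\}\}.$$ Then: (i) $Z=\bigcup_{j\in J_-}\{c_j^*\ge k_j\}$ is a posterior $(S^*,c_{\lim},\mathcal S,M_{Z,\lim})$-zero footprint with $M_{Z,\lim}=\sum_{j\in J_-}\dfrac{-c_{\lim,j}}{k_j+\beta_j\inf c_j^*}$; (ii) $F=\bigcup_{j\in J_+}\{c_j^*\ge k_j\}$ is a posterior $(S^*,c_{\lim},\mathcal S,M_{F,\lim})$-footprint with $M_{F,\lim}=\max_{j\in J_+}\dfrac{c_{\lim,j}}{k_j\alpha_j+\sup c_j^*}$; (iii) $F\setminus Z$ is a posterior $(S^*,c_{\lim},\mathcal S,M_{\lim})$-footprint with $$M_{\lim}=M_{F,\lim}-M_{Z,\lim}=\max_{j\in J_+}\frac{c_{\lim,j}}{k_j\alpha_j+\sup c_j^*}+\sum_{j\in J_-}\frac{c_{\lim,j}}{k_j+\beta_j\inf c_j^*}.$$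
   Context: Let $T\subset\mathbb{R}$ be a time interval, $V\subset\mathbb{R}^3$ a spatial domain, and $\mathcal M^+$ the set of positive measures on the Borel sets of $T\times V$. A measurement tuple consists of $m\ge1$ nonnegative measurable functions $c_1^*,\dots,c_m^*$ on $T\times V$ (the adjoint concentration fields $c_j^*(s,y)=\int_{T\times V}p(t,x;s,y)\,dS_j^*(t,x)$ of sensor probability measures $S_j^*$, $p$ being the transition probability of the dispersion; we write $S^*=(S_1^*,\dots,S_m^* )$) together with a vector $c_{\lim}=(c_{\lim,1},\dots,c_{\lim,m})$ of nonzero reals. Write $\langle S,c^*\rangle=\int c^*\,dS$. A measure $S\in\mathcal M^+$ satisfies the measurement condition for $(S^*,c_{\lim})$ if for every $j$: $\langle S,c_j^*\rangle\ge c_{\lim,j}$ when $c_{\lim,j}>0$ (detection), and $\langle S,c_j^*\rangle<|c_{\lim,j}|$ when $c_{\lim,j}<0$ (non-detection). Given an admissible class $\mathcal S\subseteq\mathcal M^+$ and $M_{\lim}\in\mathbb R$, a measurable set $A\subseteq T\times V$ is: a posterior $(S^*,c_{\lim},\mathcal S,M_{\lim})$-footprint if every $S\in\mathcal S$ satisfying the measurement condition has $S(A)\ge M_{\lim}$; a prior $(S^*,c_{\lim},\mathcal S,M_{\lim})$-footprint if every $S\in\mathcal S$ with $S(A)\ge M_{\lim}$ satisfies the measurement condition; a posterior $(S^*,c_{\lim},\mathcal S,M_{\lim})$-zero footprint if every $S\in\mathcal S$ satisfying the measurement condition has $S(A)<M_{\lim}$; a prior $(S^*,c_{\lim},\mathcal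 S,M_{\lim})$-zero footprint if every $S\in\mathcal S$ with $S(A)<M_{\lim}$ satisfies the measurement condition. Suprema, infima and level sets $\{c_j^*\ge k\}=\{(s,y):c_j^*(s,y)\ge k\}$ are over $T\times V$. *)

theory Defs
  imports "HOL-Analysis.Analysis"
begin

type_synonym pt = "real \<times> (real^3)"

definition pos_measures :: "pt set \<Rightarrow> pt measure set" where
  "pos_measures X = {S. sets S = sets (restrict_space borel X)}"

definition measurement_tuple :: "pt set \<Rightarrow> nat \<Rightarrow> (nat \<Rightarrow> pt \<Rightarrow> real) \<Rightarrow> (nat \<Rightarrow> real) \<Rightarrow> bool" where
  "measurement_tuple X m c clim \<longleftrightarrow> m \<ge> 1 \<and>
     (\<forall>j\<in>{1..m}. c j \<in> borel_measurable (restrict_space borel X) \<and>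
                  (\<forall>x\<in>X. 0 \<le> c j x) \<and> clim j \<noteq> 0)"

definition pairing :: "pt measure \<Rightarrow> (pt \<Rightarrow> real) \<Rightarrow> ennreal" where
  "pairing S f = (\<integral>\<^sup>+ x. ennreal (f x) \<partial>S)"

definition meas_cond :: "nat \<Rightarrow> (nat \<Rightarrow> pt \<Rightarrow> real) \<Rightarrow> (nat \<Rightarrow> real) \<Rightarrow> pt measure \<Rightarrow> bool" where
  "meas_cond m c clim S \<longleftrightarrow>
     (\<forall>j\<in>{1..m}. (clim j > 0 \<longrightarrow> ennreal (clim j) \<le> pairing S (c j)) \<and>
                  (clim j < 0 \<longrightarrow> pairing S (c j) < ennreal \<bar>clim j\<bar>))"

text \<open>Footprints. For a real M, "S(A) \<ge> M" is rendered as ennreal M \<le> emeasure S A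
  and "S(A) < M" as emeasure S A < ennreal M (both exact, since ennreal truncates at 0).\<close>
definition posterior_footprint ::
  "pt set \<Rightarrow> nat \<Rightarrow> (nat \<Rightarrow> pt \<Rightarrow> real) \<Rightarrow> (nat \<Rightarrow> real) \<Rightarrow> pt measure set \<Rightarrow> real \<Rightarrow> pt set \<Rightarrow> bool" where
  "posterior_footprint X m c clim Adm M A \<longleftrightarrow> A \<in> sets (restrict_space borel X) \<and>
     (\<forall>S\<in>Adm. meas_cond m c clim S \<longrightarrow> ennreal M \<le> emeasure S A)"

definition posterior_zero_footprint ::
  "pt set \<Rightarrow> nat \<Rightarrow> (nat \<Rightarrow> pt \<Rightarrow> real) \<Rightarrow> (nat \<Rightarrow> real) \<Rightarrow> pt measure set \<Rightarrow> real \<Rightarrow> pt set \<Rightarrow> bool" where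
  "posterior_zero_footprint X m c clim Adm M A \<longleftrightarrow> A \<in> sets (restrict_space borel X) \<and>
     (\<forall>S\<in>Adm. meas_cond m c clim S \<longrightarrow> emeasure S A < ennreal M)"

definition upper_set :: "pt set \<Rightarrow> (pt \<Rightarrow> real) \<Rightarrow> real \<Rightarrow> pt set" where
  "upper_set X f k = {x\<in>X. f x \<ge> k}"

definition lower_set :: "pt set \<Rightarrow> (pt \<Rightarrow> real) \<Rightarrow> real \<Rightarrow> pt set" where
  "lower_set X f k = {x\<in>X. f x < k}"

definition ratio_class ::
  "pt set \<Rightarrow> nat \<Rightarrow> (nat \<Rightarrow> pt \<Rightarrow> real) \<Rightarrow> (nat \<Rightarrow> real) \<Rightarrow> (nat \<Rightarrow> real) \<Rightarrow> (nat \<Rightarrow> real) \<Rightarrow> pt measure set" where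
  "ratio_class X m c k \<alpha> \<beta> = {S\<in>pos_measures X. \<forall>j\<in>{1..m}.
      ennreal (\<beta> j) * emeasure S (upper_set X (c j) (k j)) \<le> emeasure S (lower_set X (c j) (k j)) \<and>
      emeasure S (lower_set X (c j) (k j)) \<le> ennreal (\<alpha> j) * emeasure S (upper_set X (c j) (k j))}"

end

theory Submission
  imports Defs
begin

(* Fix an admissible S and one sensor j with field f = c_j and threshold k = k_j;
   write U = {f >= k} and L = {f < k}.  Splitting the pairing <S, f> over U and L gives
     k S(U) + (inf f) S(L)  <=  <S, f>  <=  k S(L) + (sup f) S(U).
   Combined with the ratio constraints beta S(U) <= S(L) <= alpha S(U) of the admissible class,
   non-detection (<S, f> < |clim_j|) bounds S(U) from above by |clim_j| / (k + beta inf f), and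
   detection (<S, f> >= clim_j) bounds S(U) from below by clim_j / (k alpha + sup f).
   Part (i) follows by subadditivity over the finitely many non-detecting sensors, part (ii) by
   choosing the detecting sensor attaining the maximum, and part (iii) from the general fact that
   removing a zero footprint of level M_Z from a footprint of level M_F leaves a footprint of
   level M_F - M_Z. *)

lemma ennreal_less_divide_of_mult_less:
  assumes d: "0 < d" and lt: "ennreal d * x < ennreal a"
  shows "x < ennreal (a / d)"
proof (cases x)
  case (real u)
  have "ennreal (d * u) < ennreal a" using lt real d by (simp add: ennreal_mult)
  hence "d * u < a" using real d by (simp add: ennreal_less_iff)
  hence "u < a / d" using d by (simp add: pos_less_divide_eq mult.commute)
  thus ?thesis using real by (simp add: ennreal_less_iff)
next
  case top
  thus ?thesis using lt d by (simp add: ennreal_mult_top)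
qed

lemma ennreal_divide_le_of_le_mult:
  assumes d: "0 < d" and le: "ennreal a \<le> ennreal d * x"
  shows "ennreal (a / d) \<le> x"
proof (cases x)
  case (real u)
  have "ennreal a \<le> ennreal (d * u)" using le real d by (simp add: ennreal_mult)
  moreover have "0 \<le> d * u" using real d by simp
  ultimately have "a \<le> d * u" by (auto simp: ennreal_le_iff2)
  hence "a / d \<le> u" using d by (simp add: pos_divide_le_eq mult.commute)
  thus ?thesis using real by (simp add: ennreal_leI)
qed simp

lemma level_sets_measurable:
  assumes S: "sets S = sets (restrict_space borel X)"
    and f: "f \<in> borel_measurable (restrict_space borel X)"
  shows "space S = X" "upper_set X f t \<in> sets S" "lower_set X f t \<in> sets S"
    "f \<in> borel_measurable S"
proof -
  show sp: "space S = X" using sets_eq_imp_space_eq[OF S] by (simp add: space_restrict_space)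
  show fm: "f \<in> borel_measurable S" using f measurable_cong_sets[OF S refl] by blast
  have "{x\<in>space S. t \<le> f x} \<in> sets S" using fm by measurable
  then show "upper_set X f t \<in> sets S" using sp by (simp add: upper_set_def)
  have "{x\<in>space S. f x < t} \<in> sets S" using fm by measurable
  then show "lower_set X f t \<in> sets S" using sp by (simp add: lower_set_def)
qed

text \<open>Lower bound on the pairing: f is at least t on the upper level set and at least
  its lower bound i elsewhere.\<close>
lemma pairing_ge_level_split:
  assumes S: "sets S = sets (restrict_space borel X)"
    and f: "f \<in> borel_measurable (restrict_space borel X)"
    and i: "\<And>x. x \<in> X \<Longrightarrow> i \<le> f x"
  shows "ennreal t * emeasure S (upper_set X f t) + ennreal i * emeasure S (lower_set X f t)
           \<le> pairing S f"
proof -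
  note M = level_sets_measurable[OF S f]
  have "ennreal t * emeasure S (upper_set X f t) + ennreal i * emeasure S (lower_set X f t)
      = (\<integral>\<^sup>+ x. ennreal t * indicator (upper_set X f t) x
                 + ennreal i * indicator (lower_set X f t) x \<partial>S)"
    using M by (simp add: nn_integral_add nn_integral_cmult_indicator)
  also have "\<dots> \<le> pairing S f"
    unfolding pairing_def
    using M(1) i by (intro nn_integral_mono)
      (auto simp: upper_set_def lower_set_def indicator_def intro: ennreal_leI)
  finally show ?thesis .
qed

text \<open>Upper bound on the pairing: f is below t on the lower level set and at most its
  upper bound s elsewhere.\<close>
lemma pairing_le_level_split:
  assumes S: "sets S = sets (restrict_space borel X)"
    and f: "f \<in> borel_measurable (restrict_space borel X)"
    and s: "\<And>x. x \<in> X \<Longrightarrow> f x \<le> s"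
  shows "pairing S f
           \<le> ennreal t * emeasure S (lower_set X f t) + ennreal s * emeasure S (upper_set X f t)"
proof -
  note M = level_sets_measurable[OF S f]
  have "pairing S f \<le> (\<integral>\<^sup>+ x. ennreal t * indicator (lower_set X f t) x
                              + ennreal s * indicator (upper_set X f t) x \<partial>S)"
    unfolding pairing_def
    using M(1) s by (intro nn_integral_mono)
      (auto simp: upper_set_def lower_set_def indicator_def intro: ennreal_leI)
  also have "\<dots> = ennreal t * emeasure S (lower_set X f t)
                  + ennreal s * emeasure S (upper_set X f t)"
    using M by (simp add: nn_integral_add nn_integral_cmult_indicator)
  finally show ?thesis .
qed

lemma non_detection_bound:
  assumes S: "sets S = sets (restrict_space borel X)"
    and f: "f \<in> borel_measurable (restrict_space borel X)"
    and nn: "\<forall>x\<in>X. 0 \<le> f x" and X: "X \<noteq> {}" and t: "0 < t" and b: "0 \<le> b"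
    and ratio: "ennreal b * emeasure S (upper_set X f t) \<le> emeasure S (lower_set X f t)"
    and no_detect: "pairing S f < ennreal a"
  shows "emeasure S (upper_set X f t) < ennreal (a / (t + b * Inf (f ` X)))"
proof -
  define i where "i = Inf (f ` X)"
  define U where "U = emeasure S (upper_set X f t)"
  define L where "L = emeasure S (lower_set X f t)"
  have i_nonneg: "0 \<le> i" unfolding i_def using X nn by (auto intro: cInf_greatest)
  have i_lower: "i \<le> f x" if "x \<in> X" for x
  proof -
    have "bdd_below (f ` X)" using nn by (auto intro: bdd_belowI[where m=0])
    thus ?thesis unfolding i_def using that by (simp add: cInf_lower)
  qed
  have "ennreal (t + b * i) * U = ennreal t * U + ennreal i * (ennreal b * U)"
    using i_nonneg b t by (simp add: ennreal_plus ennreal_mult algebra_simps)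
  also have "\<dots> \<le> ennreal t * U + ennreal i * L"
    using ratio unfolding U_def L_def by (intro add_left_mono mult_left_mono) auto
  also have "\<dots> \<le> pairing S f"
    unfolding U_def L_def using pairing_ge_level_split[OF S f i_lower] .
  also have "\<dots> < ennreal a" by (rule no_detect)
  finally have "ennreal (t + b * i) * U < ennreal a" .
  moreover have "0 < t + b * i" using t b i_nonneg by (simp add: add_pos_nonneg)
  ultimately show ?thesis
    unfolding U_def i_def by (rule ennreal_less_divide_of_mult_less[rotated])
qed

lemma detection_bound:
  assumes S: "sets S = sets (restrict_space borel X)"
    and f: "f \<in> borel_measurable (restrict_space borel X)"
    and t: "0 < t" and al: "0 \<le> al"
    and bdd: "bdd_above (f ` X)" and sup_pos: "0 < Sup (f ` X)"
    and ratio: "emeasure S (lower_set X f t) \<le> ennreal al * emeasure S (upper_set X f t)"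
    and detect: "ennreal a \<le> pairing S f"
  shows "ennreal (a / (t * al + Sup (f ` X))) \<le> emeasure S (upper_set X f t)"
proof -
  define s where "s = Sup (f ` X)"
  define U where "U = emeasure S (upper_set X f t)"
  define L where "L = emeasure S (lower_set X f t)"
  have s_upper: "f x \<le> s" if "x \<in> X" for x unfolding s_def using bdd that by (simp add: cSup_upper)
  have "ennreal a \<le> pairing S f" by (rule detect)
  also have "\<dots> \<le> ennreal t * L + ennreal s * U"
    unfolding U_def L_def using pairing_le_level_split[OF S f s_upper] .
  also have "\<dots> \<le> ennreal t * (ennreal al * U) + ennreal s * U"
    using ratio unfolding U_def L_def by (intro add_right_mono mult_left_mono) auto
  also have "\<dots> = ennreal (t * al + s) * U"
    using sup_pos al t by (simp add: s_def ennreal_plus ennreal_mult distrib_right mult.assoc)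
  finally have "ennreal a \<le> ennreal (t * al + s) * U" .
  moreover have "0 < t * al + s" using t al sup_pos by (simp add: s_def add_nonneg_pos)
  ultimately show ?thesis
    unfolding U_def s_def by (rule ennreal_divide_le_of_le_mult[rotated])
qed

lemma ratio_classD:
  assumes "S \<in> ratio_class X m c k \<alpha> \<beta>" and "j \<in> {1..m}"
  shows "sets S = sets (restrict_space borel X)"
    "ennreal (\<beta> j) * emeasure S (upper_set X (c j) (k j)) \<le> emeasure S (lower_set X (c j) (k j))"
    "emeasure S (lower_set X (c j) (k j)) \<le> ennreal (\<alpha> j) * emeasure S (upper_set X (c j) (k j))"
  using assms by (auto simp: ratio_class_def pos_measures_def)

lemma emeasure_finite_UN_less_sum:
  assumes J: "finite J" "J \<noteq> {}" and A: "\<And>j. j \<in> J \<Longrightarrow> A j \<in> sets M"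
    and lt: "\<And>j. j \<in> J \<Longrightarrow> emeasure M (A j) < ennreal (b j)"
  shows "emeasure M (\<Union>j\<in>J. A j) < ennreal (\<Sum>j\<in>J. b j)"
proof -
  define u where "u j = enn2real (emeasure M (A j))" for j
  have u: "emeasure M (A j) = ennreal (u j)" "u j < b j" if "j \<in> J" for j
  proof -
    have "emeasure M (A j) < top" using lt[OF that] order.strict_trans ennreal_less_top by blast
    thus eq: "emeasure M (A j) = ennreal (u j)" unfolding u_def by simp
    show "u j < b j" using lt[OF that] unfolding eq by (simp add: u_def ennreal_less_iff)
  qed
  have "emeasure M (\<Union>j\<in>J. A j) \<le> (\<Sum>j\<in>J. emeasure M (A j))"
    using J(1) A by (intro emeasure_subadditive_finite) auto
  also have "\<dots> = (\<Sum>j\<in>J. ennreal (u j))" using u(1) by simp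
  also have "\<dots> = ennreal (\<Sum>j\<in>J. u j)" by (rule sum_ennreal) (simp add: u_def)
  also have "\<dots> < ennreal (\<Sum>j\<in>J. b j)"
    using u(2) J by (simp add: u_def sum_nonneg ennreal_less_iff sum_strict_mono)
  finally show ?thesis .
qed

lemma zero_footprint_non_detecting:
  assumes tuple: "measurement_tuple X m c clim" and X: "X \<noteq> {}"
    and Jm: "{j\<in>{1..m}. clim j < 0} \<noteq> {}"
    and k_pos: "\<forall>j\<in>{1..m}. 0 < k j" and \<beta>: "\<forall>j\<in>{1..m}. 0 \<le> \<beta> j"
  shows "posterior_zero_footprint X m c clim (ratio_class X m c k \<alpha> \<beta>)
           (\<Sum>j\<in>{j\<in>{1..m}. clim j < 0}. - clim j / (k j + \<beta> j * Inf (c j ` X)))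
           (\<Union>j\<in>{j\<in>{1..m}. clim j < 0}. upper_set X (c j) (k j))"
  unfolding posterior_zero_footprint_def
proof safe
  have c: "c j \<in> borel_measurable (restrict_space borel X)" "\<forall>x\<in>X. 0 \<le> c j x"
    if "j \<in> {1..m}" for j
    using tuple that by (auto simp: measurement_tuple_def)
  show "(\<Union>j\<in>{j\<in>{1..m}. clim j < 0}. upper_set X (c j) (k j)) \<in> sets (restrict_space borel X)"
    using level_sets_measurable(2)[OF refl c(1)] by auto
  fix S assume S: "S \<in> ratio_class X m c k \<alpha> \<beta>" and mc: "meas_cond m c clim S"
  show "emeasure S (\<Union>j\<in>{j\<in>{1..m}. clim j < 0}. upper_set X (c j) (k j))
        < ennreal (\<Sum>j\<in>{j\<in>{1..m}. clim j < 0}. - clim j / (k j + \<beta> j * Inf (c j ` X)))"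
  proof (rule emeasure_finite_UN_less_sum)
    fix j assume "j \<in> {j\<in>{1..m}. clim j < 0}"
    hence j: "j \<in> {1..m}" "clim j < 0" by auto
    note S_j = ratio_classD[OF S j(1)]
    have "pairing S (c j) < ennreal \<bar>clim j\<bar>" using mc j by (auto simp: meas_cond_def)
    hence "emeasure S (upper_set X (c j) (k j)) < ennreal (\<bar>clim j\<bar> / (k j + \<beta> j * Inf (c j ` X)))"
      using k_pos \<beta> j(1) by (intro non_detection_bound[OF S_j(1) c[OF j(1)] X _ _ S_j(2)]) auto
    thus "emeasure S (upper_set X (c j) (k j)) < ennreal (- clim j / (k j + \<beta> j * Inf (c j ` X)))"
      using j(2) by simp
    show "upper_set X (c j) (k j) \<in> sets S"
      using level_sets_measurable(2)[OF S_j(1) c(1)[OF j(1)]] .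
  qed (use Jm in auto)
qed

lemma footprint_detecting:
  assumes tuple: "measurement_tuple X m c clim"
    and Jp: "{j\<in>{1..m}. clim j > 0} \<noteq> {}"
    and sup_pos: "\<forall>j\<in>{1..m}. clim j > 0 \<longrightarrow> bdd_above (c j ` X) \<and> 0 < Sup (c j ` X)"
    and k_pos: "\<forall>j\<in>{1..m}. 0 < k j" and \<alpha>: "\<forall>j\<in>{1..m}. 0 \<le> \<alpha> j"
  shows "posterior_footprint X m c clim (ratio_class X m c k \<alpha> \<beta>)
           (Max ((\<lambda>j. clim j / (k j * \<alpha> j + Sup (c j ` X))) ` {j\<in>{1..m}. clim j > 0}))
           (\<Union>j\<in>{j\<in>{1..m}. clim j > 0}. upper_set X (c j) (k j))"
  unfolding posterior_footprint_def
proof safe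
  define v where "v j = clim j / (k j * \<alpha> j + Sup (c j ` X))" for j
  define F where "F = (\<Union>j\<in>{j\<in>{1..m}. clim j > 0}. upper_set X (c j) (k j))"
  have c: "c j \<in> borel_measurable (restrict_space borel X)" if "j \<in> {1..m}" for j
    using tuple that by (auto simp: measurement_tuple_def)
  show "(\<Union>j\<in>{j\<in>{1..m}. clim j > 0}. upper_set X (c j) (k j)) \<in> sets (restrict_space borel X)"
    using level_sets_measurable(2)[OF refl c] by auto
  fix S assume S: "S \<in> ratio_class X m c k \<alpha> \<beta>" and mc: "meas_cond m c clim S"
  have "Max (v ` {j\<in>{1..m}. clim j > 0}) \<in> v ` {j\<in>{1..m}. clim j > 0}"
    by (rule Max_in) (use Jp in auto)
  then obtain j where j: "j \<in> {1..m}" "clim j > 0"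
    and max: "Max (v ` {j\<in>{1..m}. clim j > 0}) = v j" by auto
  note S_j = ratio_classD[OF S j(1)]
  have "ennreal (clim j) \<le> pairing S (c j)" using j mc by (auto simp: meas_cond_def)
  hence "ennreal (v j) \<le> emeasure S (upper_set X (c j) (k j))"
    unfolding v_def using j k_pos \<alpha> sup_pos
    by (intro detection_bound[OF S_j(1) c[OF j(1)] _ _ _ _ S_j(3)]) auto
  also have "\<dots> \<le> emeasure S F"
    using j level_sets_measurable(2)[OF S_j(1) c] by (intro emeasure_mono) (auto simp: F_def)
  finally show "ennreal (Max (v ` {j\<in>{1..m}. clim j > 0})) \<le> emeasure S F"
    unfolding max .
qed

lemma footprint_diff_zero_footprint:
  assumes Adm: "Adm \<subseteq> pos_measures X"
    and F: "posterior_footprint X m c clim Adm MF F"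
    and Z: "posterior_zero_footprint X m c clim Adm MZ Z"
  shows "posterior_footprint X m c clim Adm (MF - MZ) (F - Z)"
  unfolding posterior_footprint_def
proof safe
  have Fs: "F \<in> sets (restrict_space borel X)" and Zs: "Z \<in> sets (restrict_space borel X)"
    using F Z by (auto simp: posterior_footprint_def posterior_zero_footprint_def)
  thus "F - Z \<in> sets (restrict_space borel X)" by auto
  fix S assume S: "S \<in> Adm" and mc: "meas_cond m c clim S"
  have sS: "sets S = sets (restrict_space borel X)" using Adm S by (auto simp: pos_measures_def)
  have "emeasure S Z < ennreal MZ" using Z S mc by (auto simp: posterior_zero_footprint_def)
  then obtain z where z: "emeasure S Z = ennreal z" "0 \<le> z" "z < MZ"
    by (cases "emeasure S Z") (auto simp: ennreal_less_iff)
  have "ennreal MF \<le> emeasure S F" using F S mc by (auto simp: posterior_footprint_def)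
  also have "\<dots> \<le> emeasure S ((F - Z) \<union> Z)"
    using sS Fs Zs by (intro emeasure_mono) auto
  also have "\<dots> \<le> emeasure S (F - Z) + ennreal z"
    unfolding z(1)[symmetric] using sS Fs Zs by (intro emeasure_subadditive) auto
  finally have MF_le: "ennreal MF \<le> emeasure S (F - Z) + ennreal z" .
  show "ennreal (MF - MZ) \<le> emeasure S (F - Z)"
  proof (cases "emeasure S (F - Z)")
    case (real a)
    have "ennreal MF \<le> ennreal (a + z)" using MF_le real z(2) by (simp add: ennreal_plus)
    hence "MF \<le> a + z" using real z(2) by (subst (asm) ennreal_le_iff) auto
    thus ?thesis using real z(3) by (simp add: ennreal_leI)
  qed simp
qed

theorem mainTheorem15:
  fixes T :: "real set" and V :: "(real^3) set"
    and m :: nat and c :: "nat \<Rightarrow> pt \<Rightarrow> real" and clim :: "nat \<Rightarrow> real"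
    and k \<alpha> \<beta> :: "nat \<Rightarrow> real"
  assumes T: "is_interval T" "T \<noteq> {}"
    and V: "V \<noteq> {}"
    and tuple: "measurement_tuple (T \<times> V) m c clim"
    and Jp: "{j\<in>{1..m}. clim j > 0} \<noteq> {}"
    and Jm: "{j\<in>{1..m}. clim j < 0} \<noteq> {}"
    and sup_pos: "\<forall>j\<in>{1..m}. clim j > 0 \<longrightarrow>
                    bdd_above (c j ` (T \<times> V)) \<and> 0 < Sup (c j ` (T \<times> V))"
    and k_pos: "\<forall>j\<in>{1..m}. 0 < k j"
    and ab: "\<forall>j\<in>{1..m}. 0 \<le> \<beta> j \<and> \<beta> j \<le> \<alpha> j"
  shows
    "posterior_zero_footprint (T \<times> V) m c clim (ratio_class (T \<times> V) m c k \<alpha> \<beta>)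
        (\<Sum>j\<in>{j\<in>{1..m}. clim j < 0}. - clim j / (k j + \<beta> j * Inf (c j ` (T \<times> V))))
        (\<Union>j\<in>{j\<in>{1..m}. clim j < 0}. upper_set (T \<times> V) (c j) (k j))
   \<and> posterior_footprint (T \<times> V) m c clim (ratio_class (T \<times> V) m c k \<alpha> \<beta>)
        (Max ((\<lambda>j. clim j / (k j * \<alpha> j + Sup (c j ` (T \<times> V)))) ` {j\<in>{1..m}. clim j > 0}))
        (\<Union>j\<in>{j\<in>{1..m}. clim j > 0}. upper_set (T \<times> V) (c j) (k j))
   \<and> posterior_footprint (T \<times> V) m c clim (ratio_class (T \<times> V) m c k \<alpha> \<beta>)
        (Max ((\<lambda>j. clim j / (k j * \<alpha> j + Sup (c j ` (T \<times> V)))) ` {j\<in>{1..m}. clim j > 0})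
         + (\<Sum>j\<in>{j\<in>{1..m}. clim j < 0}. clim j / (k j + \<beta> j * Inf (c j ` (T \<times> V)))))
        ((\<Union>j\<in>{j\<in>{1..m}. clim j > 0}. upper_set (T \<times> V) (c j) (k j))
         - (\<Union>j\<in>{j\<in>{1..m}. clim j < 0}. upper_set (T \<times> V) (c j) (k j)))"
proof -
  have X: "T \<times> V \<noteq> {}" using T V by simp
  have \<beta>: "\<forall>j\<in>{1..m}. 0 \<le> \<beta> j" and \<alpha>: "\<forall>j\<in>{1..m}. 0 \<le> \<alpha> j"
    using ab by auto
  note Z = zero_footprint_non_detecting[OF tuple X Jm k_pos \<beta>, where \<alpha> = \<alpha>]
  note F = footprint_detecting[OF tuple Jp sup_pos k_pos \<alpha>, where \<beta> = \<beta>]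
  have "ratio_class (T \<times> V) m c k \<alpha> \<beta> \<subseteq> pos_measures (T \<times> V)"
    by (auto simp: ratio_class_def)
  from footprint_diff_zero_footprint[OF this F Z] show ?thesis
    using Z F by (simp add: sum_negf)
qed

end
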